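(* There is a constant $c_\kappa>0$, depending on $\kappa$ and $c$ but not on $\ell$, such that for every $\ell>1$ and every deterministic $f:\mathbb Z\to[-c,c]$ the following holds. Let $E_n$ be the event that for all $0\le m\le n$ and all $U\in\mathcal U_m$, \[ \big|\bar A(P_UB,f;|U|,n)-\mathbb E_B\bar A(B,f;|U|,n)\big|<c_\kappa\Big(\frac mn\Big)^{1/2-\kappa/4}\ell^{1/2+\kappa/4}n. \] Then $\mathbb P(E_n)\to1$ as $n\to\infty$.
   Context: Let $c>0$ and $0<\kappa<1/3$. $B=(B(i))_{i\ge1}$ are i.i.d. with $\mathbb P(B(i)=\pm1)=1/2$, $\mathbb E_B$ is expectation over $B$. A lazy walk satisfies $|\gamma(i+1)-\gamma(i)|\le1$; for $b:\mathbb N\to\{\pm1\}$ the action of a lazy walk $\gamma$ on $\{0,\dots,k\}$ is $A(b,f;\gamma)=\sum_{i=1}^kb(i)f(\gamma(i))$ and $\bar A(b,f;k,x)$ is its minimum over lazy walks from $(0,0)$ to $(k,x)$. For a set $U=\{u_1<u_2<\cdots\}$ of positive integers, $(P_Ub)(j)=b(u_j)$. Assume $\ell n$ is an integer (integer parts omitted). $\mathcal U_m$ is the family of subsets $U\subset\{1,\dots,\ell n\}$ with $|U|\ge n$ of the form $U=\{1,\dots,\ell n\}\setminus\bigcup_{i=0}^m(a_i,z_i]$ for some disjoint integer intervals $(a_i,z_i]\subset\{1,\dots,\ell n\}$. *)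

theory Defs
  imports "HOL-Probability.Probability"
begin

text \<open>Law of the i.i.d. symmetric sign sequence B = (B(i))_{i\<ge>1} (coordinate 0 unused).\<close>
definition sign_seq_measure :: "(nat \<Rightarrow> int) measure" where
  "sign_seq_measure = PiM UNIV (\<lambda>_::nat. measure_pmf (pmf_of_set {-1, 1::int}))"

definition lazy_walk :: "(nat \<Rightarrow> int) \<Rightarrow> nat \<Rightarrow> int \<Rightarrow> bool" where
  "lazy_walk \<gamma> k x \<longleftrightarrow> \<gamma> 0 = 0 \<and> \<gamma> k = x \<and> (\<forall>i<k. \<bar>\<gamma> (Suc i) - \<gamma> i\<bar> \<le> 1)"

definition action :: "(nat \<Rightarrow> int) \<Rightarrow> (int \<Rightarrow> real) \<Rightarrow> nat \<Rightarrow> (nat \<Rightarrow> int) \<Rightarrow> real" where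
  "action b f k \<gamma> = (\<Sum>i=1..k. real_of_int (b i) * f (\<gamma> i))"

definition min_action :: "(nat \<Rightarrow> int) \<Rightarrow> (int \<Rightarrow> real) \<Rightarrow> nat \<Rightarrow> int \<Rightarrow> real" where
  "min_action b f k x = Min {action b f k \<gamma> | \<gamma>. lazy_walk \<gamma> k x}"

text \<open>(P_U b)(j) = b(u_j) where u_1 < u_2 < ... enumerate the finite set U.\<close>
definition proj_U :: "nat set \<Rightarrow> (nat \<Rightarrow> int) \<Rightarrow> nat \<Rightarrow> int" where
  "proj_U U b j = b (sorted_list_of_set U ! (j - 1))"

text \<open>The family \<U>_m for L = l n (here L is the length, n the size threshold).\<close>
definition U_family :: "nat \<Rightarrow> nat \<Rightarrow> nat \<Rightarrow> nat set set" where
  "U_family L n m = {U. U \<subseteq> {1..L} \<and> card U \<ge> n \<and>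
     (\<exists>a z :: nat \<Rightarrow> nat.
        (\<forall>i\<le>m. a i \<le> z i \<and> z i \<le> L) \<and>
        (\<forall>i\<le>m. \<forall>j\<le>m. i \<noteq> j \<longrightarrow> {a i<..z i} \<inter> {a j<..z j} = {}) \<and>
        U = {1..L} - (\<Union>i\<le>m. {a i<..z i}))}"

end

theory Submission
  imports Defs "HOL-Real_Asymp.Real_Asymp"
begin

text \<open>For a fixed U, the minimal action of P_U B is a function of the L = l n signs B(1), ..., B(L)
  which changes by at most 2c when one sign is flipped, because the action of every single walk does.
  McDiarmid's inequality therefore bounds the probability of a deviation t by 2 exp(-t^2 / (2 c^2 L)).
  A set in the family is determined by at most 2m + 2 switch points in {0..L}, so there are at most
  exp(O(m log(l n / m))) of them, and with t of order (m/n)^(1/2 - \<kappa>/4) l^(1/2 + \<kappa>/4) n a union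
  bound over all m \<le> n and all U leaves a failure probability of at most 2 exp(-n^(\<kappa>/2)).\<close>

section \<open>Bounded differences on the discrete cube\<close>

definition sign_vectors :: "nat set \<Rightarrow> (nat \<Rightarrow> int) set" where
  "sign_vectors I = (\<Pi>\<^sub>E i\<in>I. {-1, 1})"

definition cube_avg :: "nat set \<Rightarrow> ((nat \<Rightarrow> int) \<Rightarrow> real) \<Rightarrow> real" where
  "cube_avg I g = (\<Sum>b\<in>sign_vectors I. g b) / 2 ^ card I"

definition bounded_differences :: "nat set \<Rightarrow> real \<Rightarrow> ((nat \<Rightarrow> int) \<Rightarrow> real) \<Rightarrow> bool" where
  "bounded_differences I d g \<longleftrightarrow> (\<forall>b\<in>sign_vectors I. \<forall>i\<in>I. \<bar>g b - g (b(i := - b i))\<bar> \<le> d)"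

lemma finite_sign_vectors: "finite I \<Longrightarrow> finite (sign_vectors I)"
  unfolding sign_vectors_def by (intro finite_PiE) auto

lemma card_sign_vectors: "finite I \<Longrightarrow> card (sign_vectors I) = 2 ^ card I"
  unfolding sign_vectors_def by (simp add: card_PiE numeral_2_eq_2)

lemma sign_vectors_empty [simp]: "sign_vectors {} = {\<lambda>_. undefined}"
  by (simp add: sign_vectors_def)

lemma fun_upd_in_sign_vectors:
  "b \<in> sign_vectors I \<Longrightarrow> s \<in> {-1, 1} \<Longrightarrow> b(i := s) \<in> sign_vectors (insert i I)"
  unfolding sign_vectors_def by (auto simp: PiE_iff extensional_def)

lemma sum_sign_vectors_insert:
  assumes "i \<notin> I"
  shows "(\<Sum>b\<in>sign_vectors (insert i I). F b) = (\<Sum>b\<in>sign_vectors I. F (b(i := 1)) + F (b(i := -1)))"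
proof -
  have "(\<Sum>b\<in>sign_vectors (insert i I). F b)
      = (\<Sum>p\<in>{-1, 1::int} \<times> sign_vectors I. F ((\<lambda>(s, b). b(i := s)) p))"
    unfolding sign_vectors_def PiE_insert_eq
    by (subst sum.reindex) (use inj_combinator[OF assms, of "\<lambda>_. {-1, 1::int}"] in auto)
  also have "\<dots> = (\<Sum>s\<in>{-1, 1::int}. \<Sum>b\<in>sign_vectors I. F (b(i := s)))"
    by (simp add: sum.cartesian_product split_def)
  also have "\<dots> = (\<Sum>b\<in>sign_vectors I. F (b(i := 1)) + F (b(i := -1)))"
    by (simp add: sum.distrib add.commute)
  finally show ?thesis .
qed

text \<open>The library's Hoeffding lemma for a Bernoulli(1/2) variable, rescaled to a fair sign.\<close>
lemma cosh_le_exp_half_square: "cosh (x::real) \<le> exp (x\<^sup>2 / 2)"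
proof -
  define y where "y = \<bar>x\<bar>"
  have "- (2*y) * (1/2) + ln (1 + (1/2) * (exp (2*y) - 1)) \<le> (2*y)\<^sup>2 / 8"
    using Hoeffdings_lemma_aux[of "2*y" "1/2"] by (simp add: y_def)
  hence "- y + ln ((1 + exp (2*y)) / 2) \<le> y\<^sup>2 / 2"
    by (simp add: power2_eq_square field_simps)
  moreover have "exp (- y + ln ((1 + exp (2*y)) / 2)) = exp (- y) * ((1 + exp (2*y)) / 2)"
    by (subst exp_add) (simp add: add_pos_pos)
  moreover have "exp (- y) * ((1 + exp (2*y)) / 2) = cosh y"
    by (simp add: cosh_def field_simps flip: exp_add)
  moreover have "cosh x = cosh y" "y\<^sup>2 = x\<^sup>2"
    by (simp_all add: y_def abs_if)
  ultimately show ?thesis by (metis exp_le_cancel_iff)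
qed

lemma exp_pair_le_exp_midpoint:
  fixes x y a \<theta> d :: real
  assumes "\<bar>x - y\<bar> \<le> d"
  shows "exp (\<theta> * (x - a)) + exp (\<theta> * (y - a))
           \<le> 2 * exp (\<theta>\<^sup>2 * d\<^sup>2 / 8) * exp (\<theta> * ((x + y) / 2 - a))"
proof -
  define \<delta> where "\<delta> = (x - y) / 2"
  have "\<delta>\<^sup>2 \<le> (d / 2)\<^sup>2"
    using assms by (intro power2_le_iff_abs_le[THEN iffD2]) (auto simp: \<delta>_def)
  hence "\<theta>\<^sup>2 * \<delta>\<^sup>2 \<le> \<theta>\<^sup>2 * (d / 2)\<^sup>2"
    by (rule mult_left_mono) simp
  hence "(\<theta> * \<delta>)\<^sup>2 / 2 \<le> \<theta>\<^sup>2 * d\<^sup>2 / 8"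
    by (simp add: power_mult_distrib power_divide mult_ac)
  hence "cosh (\<theta> * \<delta>) \<le> exp (\<theta>\<^sup>2 * d\<^sup>2 / 8)"
    by (meson cosh_le_exp_half_square exp_le_cancel_iff order_trans)
  moreover have "exp (\<theta> * (x - a)) + exp (\<theta> * (y - a))
      = 2 * cosh (\<theta> * \<delta>) * exp (\<theta> * ((x + y) / 2 - a))"
    by (simp add: cosh_def \<delta>_def algebra_simps diff_divide_distrib add_divide_distrib flip: exp_add)
  ultimately show ?thesis by simp
qed

lemma cube_avg_insert:
  assumes "finite I" "i \<notin> I"
  shows "cube_avg (insert i I) g = cube_avg I (\<lambda>b. (g (b(i := 1)) + g (b(i := -1))) / 2)"
  using assms by (simp add: cube_avg_def sum_sign_vectors_insert sum_divide_distrib[symmetric] field_simps)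

lemma bounded_differences_average_out:
  assumes "i \<notin> I" "bounded_differences (insert i I) d g"
  shows "bounded_differences I d (\<lambda>b. (g (b(i := 1)) + g (b(i := -1))) / 2)"
  unfolding bounded_differences_def
proof (intro ballI)
  fix b j assume b: "b \<in> sign_vectors I" and j: "j \<in> I"
  have "j \<noteq> i" using assms(1) j by auto
  have "\<bar>g (b(i := s)) - g ((b(j := - b j))(i := s))\<bar> \<le> d" if "s \<in> {-1, 1}" for s
  proof -
    define c where "c = b(i := s)"
    have "c \<in> sign_vectors (insert i I)" "j \<in> insert i I"
      using fun_upd_in_sign_vectors[OF b that] j by (simp_all add: c_def)
    hence "\<bar>g c - g (c(j := - c j))\<bar> \<le> d"
      using assms(2) unfolding bounded_differences_def by blast
    moreover have "c(j := - c j) = (b(j := - b j))(i := s)"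
      using \<open>j \<noteq> i\<close> by (auto simp: c_def fun_eq_iff)
    ultimately show ?thesis by (simp add: c_def)
  qed
  from this[of 1] this[of "-1"]
  show "\<bar>(g (b(i := 1)) + g (b(i := -1))) / 2
          - (g ((b(j := - b j))(i := 1)) + g ((b(j := - b j))(i := -1))) / 2\<bar> \<le> d"
    by (auto simp: abs_le_iff field_simps)
qed

text \<open>Hoeffding's lemma along the Doob martingale of g: average out one coordinate at a time.\<close>
lemma sum_exp_deviation_le:
  assumes "finite I" "bounded_differences I d g"
  shows "(\<Sum>b\<in>sign_vectors I. exp (\<theta> * (g b - cube_avg I g)))
           \<le> 2 ^ card I * exp (\<theta>\<^sup>2 * card I * d\<^sup>2 / 8)"
  using assms
proof (induction I arbitrary: g rule: finite_induct)
  case empty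
  then show ?case by (simp add: cube_avg_def)
next
  case (insert i I g)
  define h where "h = (\<lambda>b. (g (b(i := 1)) + g (b(i := -1))) / 2)"
  define a where "a = cube_avg I h"
  have flip: "\<bar>g (b(i := 1)) - g (b(i := -1))\<bar> \<le> d" if "b \<in> sign_vectors I" for b
  proof -
    have "b(i := 1) \<in> sign_vectors (insert i I)"
      using fun_upd_in_sign_vectors[OF that] by simp
    hence "\<bar>g (b(i := 1)) - g ((b(i := 1))(i := - (b(i := 1)) i))\<bar> \<le> d"
      using insert.prems unfolding bounded_differences_def by blast
    thus ?thesis by simp
  qed
  have "(\<Sum>b\<in>sign_vectors (insert i I). exp (\<theta> * (g b - cube_avg (insert i I) g)))
      = (\<Sum>b\<in>sign_vectors I. exp (\<theta> * (g (b(i := 1)) - a)) + exp (\<theta> * (g (b(i := -1)) - a)))"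
    using insert.hyps by (simp add: a_def h_def cube_avg_insert sum_sign_vectors_insert)
  also have "\<dots> \<le> (\<Sum>b\<in>sign_vectors I. 2 * exp (\<theta>\<^sup>2 * d\<^sup>2 / 8) * exp (\<theta> * (h b - a)))"
    unfolding h_def by (intro sum_mono exp_pair_le_exp_midpoint flip)
  also have "\<dots> = 2 * exp (\<theta>\<^sup>2 * d\<^sup>2 / 8) * (\<Sum>b\<in>sign_vectors I. exp (\<theta> * (h b - cube_avg I h)))"
    by (simp add: a_def sum_distrib_left)
  also have "\<dots> \<le> 2 * exp (\<theta>\<^sup>2 * d\<^sup>2 / 8) * (2 ^ card I * exp (\<theta>\<^sup>2 * card I * d\<^sup>2 / 8))"
    unfolding h_def
    by (intro mult_left_mono insert.IH bounded_differences_average_out insert.hyps insert.prems) simp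
  also have "\<dots> = 2 ^ card (insert i I) * exp (\<theta>\<^sup>2 * card (insert i I) * d\<^sup>2 / 8)"
    using insert.hyps by (simp add: field_simps flip: exp_add)
  finally show ?case .
qed

lemma card_le_sum_of_ge_one:
  assumes "finite S" "\<And>x. x \<in> S \<Longrightarrow> f x \<ge> (0::real)" "\<And>x. x \<in> S \<Longrightarrow> P x \<Longrightarrow> f x \<ge> 1"
  shows "real (card {x\<in>S. P x}) \<le> (\<Sum>x\<in>S. f x)"
proof -
  have "real (card {x\<in>S. P x}) \<le> (\<Sum>x\<in>{x\<in>S. P x}. f x)"
    using sum_mono[of "{x\<in>S. P x}" "\<lambda>_. 1" f] assms(3) by simp
  also have "\<dots> \<le> (\<Sum>x\<in>S. f x)"
    by (intro sum_mono2) (use assms in auto)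
  finally show ?thesis .
qed

lemma card_deviation_ge_le:
  fixes d t :: real
  assumes "finite I" "bounded_differences I d g" "d > 0" "card I > 0" "t > 0"
  shows "real (card {b\<in>sign_vectors I. g b - cube_avg I g \<ge> t})
           \<le> 2 ^ card I * exp (- 2 * t\<^sup>2 / (card I * d\<^sup>2))"
proof -
  define N where "N = real (card I)"
  define \<theta> where "\<theta> = 4 * t / (N * d\<^sup>2)"
  have "N > 0" "\<theta> > 0" using assms by (simp_all add: N_def \<theta>_def)
  have "real (card {b\<in>sign_vectors I. g b - cube_avg I g \<ge> t})
      \<le> (\<Sum>b\<in>sign_vectors I. exp (\<theta> * (g b - cube_avg I g) - \<theta> * t))"
    using \<open>\<theta> > 0\<close> finite_sign_vectors[OF assms(1)]
    by (intro card_le_sum_of_ge_one) (auto simp flip: right_diff_distrib)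
  also have "\<dots> = exp (- \<theta> * t) * (\<Sum>b\<in>sign_vectors I. exp (\<theta> * (g b - cube_avg I g)))"
    by (simp add: sum_distrib_left flip: exp_add)
  also have "\<dots> \<le> exp (- \<theta> * t) * (2 ^ card I * exp (\<theta>\<^sup>2 * N * d\<^sup>2 / 8))"
    unfolding N_def by (intro mult_left_mono sum_exp_deviation_le assms) auto
  also have "- \<theta> * t + \<theta>\<^sup>2 * N * d\<^sup>2 / 8 = - 2 * t\<^sup>2 / (N * d\<^sup>2)"
    using \<open>N > 0\<close> assms by (simp add: \<theta>_def field_simps power2_eq_square)
  hence "exp (- \<theta> * t) * (2 ^ card I * exp (\<theta>\<^sup>2 * N * d\<^sup>2 / 8))
      = 2 ^ card I * exp (- 2 * t\<^sup>2 / (card I * d\<^sup>2))"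
    by (simp add: N_def algebra_simps flip: exp_add)
  finally show ?thesis .
qed

lemma card_abs_deviation_ge_le:
  fixes d t :: real
  assumes "finite I" "bounded_differences I d g" "d > 0" "card I > 0" "t > 0"
  shows "real (card {b\<in>sign_vectors I. \<bar>g b - cube_avg I g\<bar> \<ge> t})
           \<le> 2 * 2 ^ card I * exp (- 2 * t\<^sup>2 / (card I * d\<^sup>2))"
proof -
  define a where "a = cube_avg I g"
  define upper where "upper = {b\<in>sign_vectors I. g b - a \<ge> t}"
  define lower where "lower = {b\<in>sign_vectors I. - g b - (- a) \<ge> t}"
  have "bounded_differences I d (\<lambda>b. - g b)"
    using assms(2) by (simp add: bounded_differences_def abs_minus_commute)
  moreover have "cube_avg I (\<lambda>b. - g b) = - a"
    by (simp add: a_def cube_avg_def sum_negf)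
  ultimately have "real (card lower) \<le> 2 ^ card I * exp (- 2 * t\<^sup>2 / (card I * d\<^sup>2))"
    using card_deviation_ge_le[of I d "\<lambda>b. - g b"] assms by (simp add: lower_def)
  moreover have "real (card upper) \<le> 2 ^ card I * exp (- 2 * t\<^sup>2 / (card I * d\<^sup>2))"
    using card_deviation_ge_le assms by (simp add: upper_def a_def)
  moreover have "{b\<in>sign_vectors I. \<bar>g b - cube_avg I g\<bar> \<ge> t} = upper \<union> lower"
    by (auto simp: upper_def lower_def a_def abs_if)
  hence "card {b\<in>sign_vectors I. \<bar>g b - cube_avg I g\<bar> \<ge> t} = card (upper \<union> lower)"
    by simp
  moreover have "real (card (upper \<union> lower)) \<le> real (card upper) + real (card lower)"
    by (metis card_Un_le of_nat_add of_nat_mono)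
  ultimately show ?thesis by linarith
qed

section \<open>The product measure of the signs\<close>

abbreviation sign_law :: "int measure" where
  "sign_law \<equiv> measure_pmf (pmf_of_set {-1, 1})"

lemma space_sign_seq_measure [simp]: "space sign_seq_measure = UNIV"
  by (simp add: sign_seq_measure_def space_PiM)

interpretation sign_seq: prob_space sign_seq_measure
  unfolding sign_seq_measure_def by (intro prob_space_PiM measure_pmf.prob_space_axioms)

definition cylinder :: "nat set \<Rightarrow> (nat \<Rightarrow> int) \<Rightarrow> (nat \<Rightarrow> int) set" where
  "cylinder J b = {B. \<forall>j\<in>J. B j = b j}"

lemma cylinder_eq_prod_emb: "cylinder J b = prod_emb UNIV (\<lambda>_. sign_law) J (\<Pi>\<^sub>E j\<in>J. {b j})"
  by (auto simp: cylinder_def prod_emb_def PiE_iff)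

lemma sets_cylinder: "finite J \<Longrightarrow> cylinder J b \<in> sets sign_seq_measure"
  unfolding cylinder_eq_prod_emb sign_seq_measure_def by (intro sets_PiM_I) auto

lemma measure_cylinder:
  assumes "finite J" "b \<in> sign_vectors J"
  shows "measure sign_seq_measure (cylinder J b) = 1 / 2 ^ card J"
proof -
  have "emeasure sign_seq_measure (cylinder J b) = (\<Prod>j\<in>J. emeasure sign_law {b j})"
    unfolding cylinder_eq_prod_emb sign_seq_measure_def
    by (rule emeasure_PiM_emb) (use assms in \<open>auto intro: measure_pmf.prob_space_axioms\<close>)
  also have "\<dots> = (\<Prod>j\<in>J. ennreal (1/2))"
    using assms(2) by (intro prod.cong refl)
      (auto simp: sign_vectors_def PiE_iff emeasure_pmf_single pmf_of_set)
  also have "\<dots> = ennreal (1/2) ^ card J"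
    by (rule prod_constant)
  also have "\<dots> = ennreal ((1/2) ^ card J)"
    by (rule ennreal_power) simp
  finally show ?thesis
    by (simp add: measure_def power_divide)
qed

lemma AE_sign_seq: "AE B in sign_seq_measure. \<forall>j. B j \<in> {-1, 1}"
  unfolding sign_seq_measure_def AE_all_countable
  by (intro allI AE_PiM_component measure_pmf.prob_space_axioms) (auto simp: AE_measure_pmf_iff)

lemma sets_restrict_preimage:
  assumes "finite J"
  shows "{B. restrict B J \<in> A} \<in> sets sign_seq_measure"
proof -
  have "B \<in> cylinder J b \<longleftrightarrow> restrict B J = b" if "b \<in> (\<Pi>\<^sub>E j\<in>J. UNIV)" for B b
    using that by (auto simp: cylinder_def PiE_iff extensional_def fun_eq_iff)
  hence "{B. restrict B J \<in> A} = (\<Union>b\<in>A \<inter> (\<Pi>\<^sub>E j\<in>J. UNIV). cylinder J b)"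
    by (intro set_eqI iffI) (auto intro!: UN_I[of "restrict _ J"])
  also have "\<dots> \<in> sets sign_seq_measure"
    by (intro sets.countable_UN'' countable_Int2 countable_PiE sets_cylinder assms) auto
  finally show ?thesis .
qed

lemma borel_measurable_restrict:
  fixes h :: "(nat \<Rightarrow> int) \<Rightarrow> real"
  assumes "finite J"
  shows "(\<lambda>B. h (restrict B J)) \<in> borel_measurable sign_seq_measure"
proof -
  have "(\<lambda>B. restrict B J) \<in> measurable sign_seq_measure (count_space UNIV)"
    by (rule measurableI) (use sets_restrict_preimage[OF assms] in \<open>auto simp: vimage_def\<close>)
  thus ?thesis by (rule measurable_compose) simp
qed

lemma integral_restrict:
  fixes h :: "(nat \<Rightarrow> int) \<Rightarrow> real"
  assumes "finite J"
  shows "(\<integral>B. h (restrict B J) \<partial>sign_seq_measure) = cube_avg J h"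
proof -
  have "AE B in sign_seq_measure.
          h (restrict B J) = (\<Sum>b\<in>sign_vectors J. h b * indicator (cylinder J b) B)"
    using AE_sign_seq
  proof eventually_elim
    case (elim B)
    hence "restrict B J \<in> sign_vectors J" by (simp add: sign_vectors_def)
    moreover have "B \<in> cylinder J b \<longleftrightarrow> b = restrict B J" if "b \<in> sign_vectors J" for b
      using that by (auto simp: cylinder_def sign_vectors_def PiE_iff extensional_def fun_eq_iff)
    ultimately show ?case
      by (simp add: indicator_def if_distrib sum.delta' finite_sign_vectors[OF assms] cong: if_cong)
  qed
  hence "(\<integral>B. h (restrict B J) \<partial>sign_seq_measure)
      = (\<integral>B. (\<Sum>b\<in>sign_vectors J. h b * indicator (cylinder J b) B) \<partial>sign_seq_measure)"
    by (intro integral_cong_AE borel_measurable_restrict assms)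
      (use sets_cylinder[OF assms] in auto)
  also have "\<dots> = (\<Sum>b\<in>sign_vectors J. h b * measure sign_seq_measure (cylinder J b))"
    using sets_cylinder[OF assms]
    by (subst Bochner_Integration.integral_sum)
      (auto simp: integrable_indicator_iff sign_seq.emeasure_finite less_top[symmetric])
  also have "\<dots> = cube_avg J h"
    by (simp add: measure_cylinder assms cube_avg_def sum_divide_distrib)
  finally show ?thesis .
qed

lemma measure_restrict_preimage:
  assumes "finite J"
  shows "measure sign_seq_measure {B. restrict B J \<in> A} = card (A \<inter> sign_vectors J) / 2 ^ card J"
proof -
  have "measure sign_seq_measure {B. restrict B J \<in> A}
      = (\<integral>B. indicator {B. restrict B J \<in> A} B \<partial>sign_seq_measure)"
    by simp
  also have "\<dots> = (\<integral>B. indicator A (restrict B J) \<partial>sign_seq_measure)"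
    by (simp add: indicator_def)
  also have "\<dots> = cube_avg J (indicator A)"
    by (rule integral_restrict[OF assms])
  also have "\<dots> = card (A \<inter> sign_vectors J) / 2 ^ card J"
    by (simp add: cube_avg_def indicator_def sum.If_cases finite_sign_vectors assms Int_commute)
  finally show ?thesis .
qed

section \<open>Minimal actions\<close>

lemma action_cong: "(\<And>i. i \<in> {1..k} \<Longrightarrow> b i = b' i) \<Longrightarrow> action b f k \<gamma> = action b' f k \<gamma>"
  unfolding action_def by (intro sum.cong) auto

lemma min_action_eq_Min_image:
  "min_action b f k x = Min ((\<lambda>\<gamma>. action b f k \<gamma>) ` {\<gamma>. lazy_walk \<gamma> k x})"
  unfolding min_action_def by (rule arg_cong[where f = Min]) auto

lemma min_action_cong:
  "(\<And>i. i \<in> {1..k} \<Longrightarrow> b i = b' i) \<Longrightarrow> min_action b f k x = min_action b' f k x"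
  unfolding min_action_eq_Min_image using action_cong[of k b b' f] by simp

lemma lazy_walk_abs_le:
  assumes "lazy_walk \<gamma> k x" "i \<le> k"
  shows "\<bar>\<gamma> i\<bar> \<le> int i"
  using assms(2)
proof (induction i)
  case 0
  thus ?case using assms(1) by (simp add: lazy_walk_def)
next
  case (Suc i)
  hence "\<bar>\<gamma> (Suc i) - \<gamma> i\<bar> \<le> 1" using assms(1) by (simp add: lazy_walk_def)
  with Suc show ?case by simp
qed

lemma finite_action_values: "finite ((\<lambda>\<gamma>. action b f k \<gamma>) ` {\<gamma>. lazy_walk \<gamma> k x})"
proof -
  define W where "W = PiE_dflt {..k} (0::int) (\<lambda>_. {-int k..int k})"
  have "(\<lambda>\<gamma>. action b f k \<gamma>) ` {\<gamma>. lazy_walk \<gamma> k x} \<subseteq> (\<lambda>\<gamma>. action b f k \<gamma>) ` W"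
  proof
    fix a assume "a \<in> (\<lambda>\<gamma>. action b f k \<gamma>) ` {\<gamma>. lazy_walk \<gamma> k x}"
    then obtain \<gamma> where \<gamma>: "lazy_walk \<gamma> k x" "a = action b f k \<gamma>" by auto
    define \<gamma>' where "\<gamma>' i = (if i \<le> k then \<gamma> i else 0)" for i
    have "\<gamma>' \<in> W"
      using lazy_walk_abs_le[OF \<gamma>(1)] by (force simp: W_def PiE_dflt_def \<gamma>'_def abs_le_iff)
    moreover have "action b f k \<gamma>' = a"
      unfolding \<gamma>(2) action_def \<gamma>'_def by (intro sum.cong) auto
    ultimately show "a \<in> (\<lambda>\<gamma>. action b f k \<gamma>) ` W" by force
  qed
  moreover have "finite W" unfolding W_def by (intro finite_PiE_dflt) auto
  ultimately show ?thesis using finite_subset by blast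
qed

lemma lazy_walk_min: "n \<le> k \<Longrightarrow> lazy_walk (\<lambda>i. int (min i n)) k (int n)"
  unfolding lazy_walk_def by auto

lemma Min_image_diff_le:
  fixes F G :: "'a \<Rightarrow> real"
  assumes "finite (F ` W)" "finite (G ` W)" "W \<noteq> {}" "\<And>w. w \<in> W \<Longrightarrow> \<bar>F w - G w\<bar> \<le> D"
  shows "\<bar>Min (F ` W) - Min (G ` W)\<bar> \<le> D"
proof -
  obtain w1 where w1: "w1 \<in> W" "Min (F ` W) = F w1" using Min_in[OF assms(1)] assms(3) by auto
  obtain w2 where w2: "w2 \<in> W" "Min (G ` W) = G w2" using Min_in[OF assms(2)] assms(3) by auto
  have "F w1 \<le> F w2" "G w2 \<le> G w1"
    using w1 w2 Min_le[OF assms(1)] Min_le[OF assms(2)] by fastforce+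
  thus ?thesis using w1 w2 assms(4)[of w1] assms(4)[of w2] by (simp add: abs_le_iff)
qed

lemma min_action_diff_le:
  assumes "n \<le> k" "\<And>\<gamma>. \<bar>action b f k \<gamma> - action b' f k \<gamma>\<bar> \<le> D"
  shows "\<bar>min_action b f k (int n) - min_action b' f k (int n)\<bar> \<le> D"
  unfolding min_action_eq_Min_image
  by (rule Min_image_diff_le[OF finite_action_values finite_action_values])
    (use lazy_walk_min[OF assms(1)] assms(2) in auto)

lemma sorted_list_of_set_nth_mem:
  assumes "finite U" "j \<in> {1..card U}"
  shows "sorted_list_of_set U ! (j - 1) \<in> U"
  using assms nth_mem[of "j - 1" "sorted_list_of_set U"] by auto

lemma sum_sorted_list_of_set_nth:
  assumes "finite U"
  shows "(\<Sum>j\<in>{1..card U}. \<phi> (sorted_list_of_set U ! (j - 1))) = (\<Sum>u\<in>U. \<phi> u)"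
proof -
  have "(\<Sum>j\<in>{1..card U}. \<phi> (sorted_list_of_set U ! (j - 1))) = (\<Sum>j<card U. \<phi> (sorted_list_of_set U ! j))"
    using sum.atLeast1_atMost_eq[of "\<lambda>j. \<phi> (sorted_list_of_set U ! (j - 1))" "card U"] by simp
  also have "\<dots> = (\<Sum>u\<in>U. \<phi> u)"
    by (rule sum.reindex_bij_betw, rule bij_betw_nth) (use assms in auto)
  finally show ?thesis .
qed

lemma min_action_proj_U_cong:
  assumes "finite U" "\<And>u. u \<in> U \<Longrightarrow> b u = b' u"
  shows "min_action (proj_U U b) f (card U) x = min_action (proj_U U b') f (card U) x"
  by (rule min_action_cong) (use assms sorted_list_of_set_nth_mem[OF assms(1)] in \<open>auto simp: proj_U_def\<close>)

text \<open>Flipping one sign changes the action of every walk by at most 2c.\<close>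
lemma bounded_differences_min_action_proj_U:
  assumes "finite U" "n \<le> card U" "\<And>x. \<bar>f x\<bar> \<le> c"
  shows "bounded_differences J (2 * c) (\<lambda>b. min_action (proj_U U b) f (card U) (int n))"
  unfolding bounded_differences_def
proof (intro ballI min_action_diff_le[OF assms(2)])
  fix b i \<gamma> assume b: "b \<in> sign_vectors J" and i: "i \<in> J"
  define b' where "b' = b(i := - b i)"
  let ?xs = "sorted_list_of_set U"
  have "\<bar>action (proj_U U b) f (card U) \<gamma> - action (proj_U U b') f (card U) \<gamma>\<bar>
      = \<bar>\<Sum>j\<in>{1..card U}. (real_of_int (b (?xs ! (j - 1))) - b' (?xs ! (j - 1))) * f (\<gamma> j)\<bar>"
    unfolding action_def proj_U_def by (simp add: sum_subtractf left_diff_distrib)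
  also have "\<dots> \<le> (\<Sum>j\<in>{1..card U}. \<bar>real_of_int (b (?xs ! (j - 1))) - b' (?xs ! (j - 1))\<bar> * c)"
    by (rule order_trans[OF sum_abs sum_mono]) (simp add: abs_mult mult_left_mono assms(3))
  also have "\<dots> = (\<Sum>u\<in>U. \<bar>real_of_int (b u) - b' u\<bar> * c)"
    by (rule sum_sorted_list_of_set_nth[OF assms(1)])
  also have "\<dots> = (\<Sum>u\<in>U. if u = i then \<bar>2 * real_of_int (b i)\<bar> * c else 0)"
    by (intro sum.cong refl) (auto simp: b'_def)
  also have "\<dots> = (if i \<in> U then \<bar>2 * real_of_int (b i)\<bar> * c else 0)"
    using assms(1) by (rule sum.delta)
  also have "\<dots> \<le> 2 * c"
    using b i assms(3)[of 0] by (auto simp: sign_vectors_def PiE_iff)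
  finally show "\<bar>action (proj_U U b) f (card U) \<gamma> - action (proj_U U (b(i := - b i))) f (card U) \<gamma>\<bar> \<le> 2 * c"
    by (simp add: b'_def)
qed

lemma cube_avg_eq_if_independent:
  assumes "finite I" "finite D" "D \<inter> I = {}"
    and "\<And>b b'. (\<And>i. i \<in> I \<Longrightarrow> b i = b' i) \<Longrightarrow> G b = G b'"
  shows "cube_avg (I \<union> D) G = cube_avg I G"
  using assms(2,3)
proof (induction D rule: finite_induct)
  case (insert a D)
  have "G (b(a := s)) = G b" for b s
    using insert.prems by (intro assms(4)) auto
  hence "cube_avg (insert a (I \<union> D)) G = cube_avg (I \<union> D) G"
    using insert assms(1) by (simp add: cube_avg_insert)
  thus ?case using insert by simp
qed simp

lemma cube_avg_proj_U:
  assumes "finite U" "\<And>r r'. (\<And>j. j \<in> {1..card U} \<Longrightarrow> r j = r' j) \<Longrightarrow> g r = g r'"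
  shows "cube_avg U (\<lambda>b. g (proj_U U b)) = cube_avg {1..card U} g"
proof -
  define \<psi> where "\<psi> b = restrict (proj_U U b) {1..card U}" for b
  let ?xs = "sorted_list_of_set U"
  have "\<psi> b \<in> sign_vectors {1..card U}" if "b \<in> sign_vectors U" for b
    using that sorted_list_of_set_nth_mem[OF assms(1)]
    by (auto simp: \<psi>_def proj_U_def sign_vectors_def PiE_iff)
  hence into: "\<psi> ` sign_vectors U \<subseteq> sign_vectors {1..card U}" by blast
  have inj: "inj_on \<psi> (sign_vectors U)"
  proof
    fix b b' assume b: "b \<in> sign_vectors U" "b' \<in> sign_vectors U" "\<psi> b = \<psi> b'"
    have "b u = b' u" if u: "u \<in> U" for u
    proof -
      obtain j where j: "j < card U" "?xs ! j = u"
        using u assms(1) in_set_conv_nth[of u ?xs] by auto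
      have "\<psi> b (Suc j) = b u" "\<psi> b' (Suc j) = b' u"
        using j by (simp_all add: \<psi>_def proj_U_def)
      thus ?thesis using b(3) by simp
    qed
    thus "b = b'"
      using b(1,2) by (intro extensionalityI[of _ U]) (auto simp: sign_vectors_def PiE_iff)
  qed
  have img: "\<psi> ` sign_vectors U = sign_vectors {1..card U}"
  proof (rule card_subset_eq[OF finite_sign_vectors into])
    show "card (\<psi> ` sign_vectors U) = card (sign_vectors {1..card U})"
      using assms(1) by (simp add: card_image[OF inj] card_sign_vectors)
  qed simp
  have "(\<Sum>b\<in>sign_vectors U. g (proj_U U b)) = (\<Sum>b\<in>sign_vectors U. g (\<psi> b))"
    by (intro sum.cong refl assms(2)) (simp add: \<psi>_def)
  also have "\<dots> = (\<Sum>r\<in>\<psi> ` sign_vectors U. g r)"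
    by (rule sum.reindex[OF inj, symmetric, unfolded comp_def])
  finally show ?thesis
    by (simp add: cube_avg_def img)
qed

lemma cube_avg_min_action_proj_U:
  assumes "finite J" "U \<subseteq> J"
  shows "cube_avg J (\<lambda>b. min_action (proj_U U b) f (card U) x)
       = (\<integral>B. min_action B f (card U) x \<partial>sign_seq_measure)"
proof -
  have U: "finite U" using assms finite_subset by blast
  have "cube_avg J (\<lambda>b. min_action (proj_U U b) f (card U) x)
      = cube_avg (U \<union> (J - U)) (\<lambda>b. min_action (proj_U U b) f (card U) x)"
    using assms(2) by (simp add: Un_absorb1)
  also have "\<dots> = cube_avg U (\<lambda>b. min_action (proj_U U b) f (card U) x)"
    using assms U by (intro cube_avg_eq_if_independent min_action_proj_U_cong) auto
  also have "\<dots> = cube_avg {1..card U} (\<lambda>r. min_action r f (card U) x)"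
    by (intro cube_avg_proj_U U min_action_cong) auto
  also have "\<dots> = (\<integral>B. min_action (restrict B {1..card U}) f (card U) x \<partial>sign_seq_measure)"
    by (rule integral_restrict[symmetric]) simp
  also have "\<dots> = (\<integral>B. min_action B f (card U) x \<partial>sign_seq_measure)"
    by (intro Bochner_Integration.integral_cong refl min_action_cong) simp
  finally show ?thesis .
qed

section \<open>Counting the family of subsequences\<close>

lemma card_subsets_card_le:
  fixes x :: real
  assumes "finite S" "0 < x" "x \<le> 1"
  shows "real (card {A\<in>Pow S. card A \<le> d}) \<le> (1 + x) ^ card S / x ^ d"
proof -
  have "real (card {A\<in>Pow S. card A \<le> d}) \<le> (\<Sum>A\<in>Pow S. x ^ card A / x ^ d)"
  proof (rule card_le_sum_of_ge_one)
    fix A assume "A \<in> Pow S" "card A \<le> d"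
    hence "x ^ d \<le> x ^ card A" using assms by (intro power_decreasing) auto
    thus "1 \<le> x ^ card A / x ^ d" using assms by simp
  qed (use assms in auto)
  also have "\<dots> = (\<Sum>A\<in>Pow S. (\<Prod>a\<in>A. x) * (\<Prod>a\<in>S - A. 1)) / x ^ d"
    by (simp add: sum_divide_distrib)
  also have "(\<Sum>A\<in>Pow S. (\<Prod>a\<in>A. x) * (\<Prod>a\<in>S - A. 1)) = (1 + x) ^ card S"
    using prod_add[OF assms(1), of "\<lambda>_. x" "\<lambda>_. 1"] by (simp add: add.commute)
  finally show ?thesis .
qed

lemma card_subsets_card_le_exp:
  assumes "finite S" "d > 0"
  shows "real (card {A\<in>Pow S. card A \<le> d}) \<le> ((real (card S) + real d) / real d) ^ d * exp (real d)"
proof -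
  define x where "x = real d / (real (card S) + real d)"
  have x: "0 < x" "x \<le> 1" using assms by (auto simp: x_def field_simps)
  have "real (card {A\<in>Pow S. card A \<le> d}) \<le> (1 + x) ^ card S / x ^ d"
    by (rule card_subsets_card_le[OF assms(1) x])
  also have "\<dots> \<le> exp x ^ card S / x ^ d"
    using x by (intro divide_right_mono power_mono) auto
  also have "exp x ^ card S / x ^ d = exp (x * card S) / x ^ d"
    by (simp add: exp_of_nat_mult[symmetric] mult.commute)
  also have "\<dots> \<le> exp d / x ^ d"
  proof -
    have "x * card S \<le> d" using assms by (simp add: x_def field_simps)
    thus ?thesis using x by (intro divide_right_mono) auto
  qed
  also have "\<dots> = ((real (card S) + real d) / real d) ^ d * exp (real d)"
    using assms by (simp add: x_def power_divide field_simps)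
  finally show ?thesis .
qed

text \<open>A set U \<subseteq> {1..L} is recorded by the points x \<le> L where membership switches between x and x + 1,
  with 0 and everything beyond L counted as members.\<close>
definition padded_mem :: "nat \<Rightarrow> nat set \<Rightarrow> nat \<Rightarrow> bool" where
  "padded_mem L U x \<longleftrightarrow> x = 0 \<or> x > L \<or> x \<in> U"

definition switch_points :: "nat \<Rightarrow> nat set \<Rightarrow> nat set" where
  "switch_points L U = {x\<in>{0..L}. padded_mem L U x \<noteq> padded_mem L U (Suc x)}"

lemma switch_points_inj:
  assumes "U \<subseteq> {1..L}" "V \<subseteq> {1..L}" "switch_points L U = switch_points L V"
  shows "U = V"
proof -
  have same: "padded_mem L U x = padded_mem L V x" for x
  proof (induction x)
    case (Suc x)
    have "x \<in> switch_points L U \<longleftrightarrow> x \<in> switch_points L V" using assms(3) by simp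
    show ?case
    proof (cases "x \<le> L")
      case True
      thus ?thesis using Suc \<open>x \<in> switch_points L U \<longleftrightarrow> x \<in> switch_points L V\<close>
        unfolding switch_points_def by auto
    qed (simp add: padded_mem_def)
  qed (simp add: padded_mem_def)
  show ?thesis
  proof (intro set_eqI)
    fix u show "u \<in> U \<longleftrightarrow> u \<in> V"
      using same[of u] assms(1,2) by (auto simp: padded_mem_def)
  qed
qed

text \<open>Every switch point of a set in the family is a left or right end of a removed interval.\<close>
lemma card_switch_points_le:
  assumes "U \<in> U_family L n m"
  shows "card (switch_points L U) \<le> 2 * m + 2"
proof -
  from assms obtain a z :: "nat \<Rightarrow> nat" where
    az: "\<forall>i\<le>m. a i \<le> z i \<and> z i \<le> L" and U: "U = {1..L} - (\<Union>i\<le>m. {a i<..z i})"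
    unfolding U_family_def by blast
  have "switch_points L U \<subseteq> a ` {..m} \<union> z ` {..m}"
  proof
    fix x assume x: "x \<in> switch_points L U"
    hence "x \<le> L" and switch: "padded_mem L U x \<noteq> padded_mem L U (Suc x)"
      by (auto simp: switch_points_def)
    show "x \<in> a ` {..m} \<union> z ` {..m}"
    proof (cases "padded_mem L U x")
      case True
      hence "Suc x \<notin> U" "Suc x \<le> L" using switch by (auto simp: padded_mem_def)
      then obtain i where i: "i \<le> m" "a i < Suc x" "Suc x \<le> z i" using U by auto
      have "x \<notin> {a i<..z i}"
      proof
        assume "x \<in> {a i<..z i}"
        hence "x \<noteq> 0" "x \<notin> U" using U i by auto
        thus False using True \<open>x \<le> L\<close> by (auto simp: padded_mem_def)
      qed
      hence "x = a i" using i by auto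
      thus ?thesis using i by auto
    next
      case False
      hence "x \<notin> U" "x \<noteq> 0" by (auto simp: padded_mem_def)
      then obtain i where i: "i \<le> m" "a i < x" "x \<le> z i" using U \<open>x \<le> L\<close> by auto
      have "Suc x \<notin> {a i<..z i}"
      proof
        assume Sx: "Suc x \<in> {a i<..z i}"
        hence "Suc x \<le> L" using az i by auto
        moreover have "Suc x \<notin> U" unfolding U using Sx i(1) by blast
        ultimately show False using switch False by (auto simp: padded_mem_def)
      qed
      hence "x = z i" using i by auto
      thus ?thesis using i by auto
    qed
  qed
  hence "card (switch_points L U) \<le> card (a ` {..m} \<union> z ` {..m})"
    by (intro card_mono) auto
  also have "\<dots> \<le> card (a ` {..m}) + card (z ` {..m})"
    by (rule card_Un_le)
  also have "\<dots> \<le> 2 * m + 2"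
    using card_image_le[of "{..m}" a] card_image_le[of "{..m}" z] by simp
  finally show ?thesis .
qed

lemma U_family_memD: "U \<in> U_family L n m \<Longrightarrow> U \<subseteq> {1..L} \<and> n \<le> card U"
  by (simp add: U_family_def)

lemma finite_U_family: "finite (U_family L n m)"
proof (rule finite_subset)
  show "U_family L n m \<subseteq> Pow {1..L}" using U_family_memD by blast
qed simp

lemma card_U_family_le:
  "real (card (U_family L n m))
     \<le> ((real (Suc L) + real (2*m+2)) / real (2*m+2)) ^ (2*m+2) * exp (real (2*m+2))"
proof -
  have "inj_on (switch_points L) (U_family L n m)"
  proof (rule inj_onI)
    fix U V
    assume UV: "U \<in> U_family L n m" "V \<in> U_family L n m" "switch_points L U = switch_points L V"
    show "U = V"
      using switch_points_inj[of U L V] U_family_memD[OF UV(1)] U_family_memD[OF UV(2)] UV(3) by blast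
  qed
  hence "card (U_family L n m) = card (switch_points L ` U_family L n m)"
    by (rule card_image[symmetric])
  also have "\<dots> \<le> card {A\<in>Pow {0..L}. card A \<le> 2*m+2}"
    using card_switch_points_le by (intro card_mono) (auto simp: switch_points_def)
  finally have "real (card (U_family L n m)) \<le> real (card {A\<in>Pow {0..L}. card A \<le> 2*m+2})"
    by simp
  also have "\<dots> \<le> ((real (card {0..L}) + real (2*m+2)) / real (2*m+2)) ^ (2*m+2) * exp (real (2*m+2))"
    by (rule card_subsets_card_le_exp) auto
  finally show ?thesis by simp
qed

section \<open>The union bound\<close>

lemma threshold_square:
  fixes m n l e :: real
  assumes "m > 0" "n > 0" "l > 0"
  shows "((m/n) powr (1/2 - e/2) * l powr (1/2 + e/2) * n)\<^sup>2 = l * n * (m * (l * n / m) powr e)"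
proof -
  have A: "((m/n) powr (1/2 - e/2))\<^sup>2 = m / n * (n powr e / m powr e)"
    using assms by (simp add: power2_eq_square powr_minus powr_divide field_simps flip: powr_add)
  have "(l powr (1/2 + e/2))\<^sup>2 = l powr (1 + e)"
    by (simp add: power2_eq_square flip: powr_add)
  also have "\<dots> = l * l powr e"
    using assms by (simp add: powr_add)
  finally have B: "(l powr (1/2 + e/2))\<^sup>2 = l * l powr e" .
  have C: "(l * n / m) powr e = l powr e * n powr e / m powr e"
    using assms by (simp add: powr_divide powr_mult)
  show ?thesis
    unfolding power_mult_distrib A B C using assms by (simp add: field_simps power2_eq_square)
qed

lemma mult_powr_ratio_ge:
  fixes m n l e :: real
  assumes "1 \<le> m" "m \<le> n" "1 \<le> l" "0 < e" "e \<le> 1"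
  shows "m * (l * n / m) powr e \<ge> m" "m * (l * n / m) powr e \<ge> n powr e"
proof -
  have "n \<le> l * n" using mult_right_mono[of 1 l n] assms by simp
  hence "m \<le> l * n" using assms by linarith
  hence "l * n / m \<ge> 1" using assms by simp
  hence "(l * n / m) powr e \<ge> 1" using assms ge_one_powr_ge_zero by simp
  thus "m * (l * n / m) powr e \<ge> m" using assms by simp
  have "m powr e \<le> m"
    using powr_mono[of e 1 m] assms by simp
  hence "(l * n) powr e \<le> m * (l * n) powr e / m powr e"
    using assms by (simp add: field_simps mult_right_mono)
  moreover have "n powr e \<le> (l * n) powr e"
    using \<open>n \<le> l * n\<close> assms by (intro powr_mono2) auto
  ultimately show "m * (l * n / m) powr e \<ge> n powr e"
    using assms by (simp add: powr_divide)
qed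

lemma card_U_family_le_exp:
  fixes l e :: real
  assumes "1 \<le> m" "m \<le> n" "1 \<le> l" "real L \<le> l * n" "e > 0"
  shows "real (card (U_family L n m)) \<le> exp (4 * real m * (3 + 1/e) * (l * n / m) powr e)"
proof -
  define d where "d = 2 * m + 2"
  define y where "y = l * n / m"
  have "n \<le> l * n" using mult_right_mono[of 1 l n] assms by simp
  moreover have "real m \<le> real n" using assms(2) by simp
  ultimately have "real m \<le> l * n" by linarith
  hence "y \<ge> 1" using assms by (simp add: y_def)
  have "(real (Suc L) + d) / d \<le> 3 * y"
  proof -
    have "real (Suc L) + d \<le> 6 * (l * n)"
      using assms \<open>n \<le> l * n\<close> \<open>real m \<le> l * n\<close> by (simp add: d_def)
    hence "m * (real (Suc L) + d) \<le> m * (6 * (l * n))"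
      by (intro mult_left_mono) simp_all
    also have "\<dots> = 3 * (l * n) * (2 * m)"
      by simp
    also have "\<dots> \<le> 3 * (l * n) * d"
      using \<open>n \<le> l * n\<close> assms by (intro mult_left_mono) (auto simp: d_def)
    finally have "m * (real (Suc L) + d) \<le> 3 * (l * n) * d" .
    thus ?thesis using assms by (simp add: y_def d_def field_simps)
  qed
  hence "((real (Suc L) + d) / d) ^ d * exp d \<le> (3 * y) ^ d * exp d"
    by (intro mult_right_mono power_mono) (auto simp: d_def)
  also have "\<dots> = exp (d * (1 + ln (3 * y)))"
    using \<open>y \<ge> 1\<close> by (simp add: distrib_left exp_add exp_of_nat_mult)
  also have "\<dots> \<le> exp (4 * m * (1 + ln 3 + ln y))"
  proof -
    have "1 + ln (3 * y) = 1 + ln 3 + ln y" using \<open>y \<ge> 1\<close> by (simp add: ln_mult)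
    moreover have "0 \<le> 1 + ln (3 * y)" using \<open>y \<ge> 1\<close> by simp
    moreover have "real d \<le> 4 * m" using assms by (simp add: d_def)
    ultimately show ?thesis by (simp add: mult_right_mono add.assoc)
  qed
  also have "\<dots> \<le> exp (4 * m * (3 + 1/e) * y powr e)"
  proof -
    have "y powr e \<ge> 1" using \<open>y \<ge> 1\<close> assms ge_one_powr_ge_zero by simp
    moreover have "ln 3 \<le> (2::real)" using ln_le_minus_one[of 3] by simp
    moreover have "e * ln y \<le> y powr e"
      using ln_le_minus_one[of "y powr e"] \<open>y \<ge> 1\<close> by (simp add: ln_powr)
    hence "ln y \<le> y powr e / e" using assms by (simp add: field_simps)
    ultimately have "1 + ln 3 + ln y \<le> (3 + 1/e) * y powr e"
      by (simp add: algebra_simps)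
    thus ?thesis using assms by (simp add: mult_left_mono mult.assoc)
  qed
  finally show ?thesis
    using card_U_family_le[of L n m] by (simp add: d_def y_def)
qed

text \<open>The factor 24 + 16/\<kappa> makes the tail bound for one U beat the number
  exp((12 + 8/\<kappa>) m (l n / m)^(\<kappa>/2)) of sets in the family, with enough room left to sum over m.\<close>
definition deviation_threshold :: "real \<Rightarrow> real \<Rightarrow> real \<Rightarrow> nat \<Rightarrow> nat \<Rightarrow> real" where
  "deviation_threshold c \<kappa> l n m =
     c * sqrt (2 * (24 + 16/\<kappa>)) * (m / n) powr (1/2 - \<kappa>/4) * l powr (1/2 + \<kappa>/4) * n"

lemma union_bound_term_le:
  fixes c \<kappa> l :: real
  assumes "c > 0" "0 < \<kappa>" "\<kappa> \<le> 2" "l > 1" "1 \<le> m" "m \<le> n" "0 < L" "real L \<le> l * n"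
  shows "card (U_family L n m) * (2 * exp (- 2 * (deviation_threshold c \<kappa> l n m)\<^sup>2 / (L * (2*c)\<^sup>2)))
           \<le> 2 * exp (- (m + n powr (\<kappa>/2)))"
proof -
  define K where "K = 24 + 16/\<kappa>"
  define t where "t = deviation_threshold c \<kappa> l n m"
  define e where "e = \<kappa>/2"
  define z where "z = m * (l * n / m) powr e"
  have "K > 0" unfolding K_def using assms by (intro add_pos_pos) auto
  have z: "z \<ge> m" "z \<ge> n powr e"
    using mult_powr_ratio_ge[of m n l e] assms by (auto simp: z_def e_def)
  have "card (U_family L n m) \<le> exp (4 * real m * (3 + 1/e) * (l * n / m) powr e)"
    by (rule card_U_family_le_exp) (use assms in \<open>auto simp: e_def\<close>)
  also have "4 * real m * (3 + 1/e) * (l * n / m) powr e = K/2 * z"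
    by (simp add: z_def K_def e_def field_simps)
  finally have "card (U_family L n m) \<le> exp (K/2 * z)" .
  moreover have "2 * t\<^sup>2 / (L * (2*c)\<^sup>2) \<ge> K * z"
  proof -
    have "t\<^sup>2 = 2 * K * c\<^sup>2 * (l * n * z)"
      using threshold_square[of m n l e] assms \<open>K > 0\<close>
      by (simp add: t_def K_def deviation_threshold_def z_def e_def power_mult_distrib)
    hence "2 * t\<^sup>2 / (L * (2*c)\<^sup>2) = K * z * (l * n / L)"
      using assms by (simp add: power_mult_distrib field_simps)
    moreover have "l * n / L \<ge> 1" using assms by simp
    ultimately show ?thesis
      using \<open>K > 0\<close> z mult_left_mono[of 1 "l * n / L" "K * z"] by simp
  qed
  ultimately have "card (U_family L n m) * (2 * exp (- 2 * t\<^sup>2 / (L * (2*c)\<^sup>2)))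
      \<le> exp (K/2 * z) * (2 * exp (- (K * z)))"
    by (intro mult_mono) auto
  also have "\<dots> = 2 * exp (- (K/2 * z))"
    by (simp add: field_simps flip: exp_add)
  also have "\<dots> \<le> 2 * exp (- (m + n powr (\<kappa>/2)))"
  proof -
    have "K/2 \<ge> 2" using assms by (simp add: K_def field_simps)
    hence "K/2 * z \<ge> 2 * z" using z by (intro mult_right_mono) auto
    thus ?thesis using z by (simp add: e_def)
  qed
  finally show ?thesis by (simp add: t_def)
qed

lemma sum_exp_neg_le: "(\<Sum>m\<in>{1..n}. exp (- real m)) \<le> 1 - exp (- real n)"
proof (induction n)
  case (Suc n)
  have "2 * exp (- real (Suc n)) \<le> exp 1 * exp (- real (Suc n))"
    using exp_ge_add_one_self[of 1] by (intro mult_right_mono) auto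
  also have "\<dots> = exp (- real n)" by (simp flip: exp_add)
  finally show ?case using Suc by simp
qed simp

lemma sum_union_bound_le:
  fixes c \<kappa> l :: real
  assumes "c > 0" "0 < \<kappa>" "\<kappa> \<le> 2" "l > 1" "0 < L" "real L \<le> l * n"
  shows "(\<Sum>m\<in>{1..n}. card (U_family L n m)
            * (2 * exp (- 2 * (deviation_threshold c \<kappa> l n m)\<^sup>2 / (L * (2*c)\<^sup>2))))
         \<le> 2 * exp (- (n powr (\<kappa>/2)))"
proof -
  have "card (U_family L n m) * (2 * exp (- 2 * (deviation_threshold c \<kappa> l n m)\<^sup>2 / (L * (2*c)\<^sup>2)))
      \<le> 2 * exp (- (n powr (\<kappa>/2))) * exp (- real m)" if "m \<in> {1..n}" for m
  proof -
    have "card (U_family L n m) * (2 * exp (- 2 * (deviation_threshold c \<kappa> l n m)\<^sup>2 / (L * (2*c)\<^sup>2)))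
        \<le> 2 * exp (- (m + n powr (\<kappa>/2)))"
      by (rule union_bound_term_le) (use assms that in auto)
    thus ?thesis by (simp add: mult.assoc add.commute flip: exp_add)
  qed
  hence "(\<Sum>m\<in>{1..n}. card (U_family L n m)
            * (2 * exp (- 2 * (deviation_threshold c \<kappa> l n m)\<^sup>2 / (L * (2*c)\<^sup>2))))
      \<le> (\<Sum>m\<in>{1..n}. 2 * exp (- (n powr (\<kappa>/2))) * exp (- real m))"
    by (rule sum_mono)
  also have "\<dots> = 2 * exp (- (n powr (\<kappa>/2))) * (\<Sum>m\<in>{1..n}. exp (- real m))"
    by (simp add: sum_distrib_left)
  also have "\<dots> \<le> 2 * exp (- (n powr (\<kappa>/2)))"
  proof -
    have "(\<Sum>m\<in>{1..n}. exp (- real m)) \<le> 1"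
      using sum_exp_neg_le[of n] exp_ge_zero[of "- real n"] by linarith
    thus ?thesis by (intro mult_left_le) auto
  qed
  finally show ?thesis .
qed

lemma sets_min_action_proj_U:
  assumes "finite U"
  shows "{B. P (min_action (proj_U U B) f (card U) x)} \<in> sets sign_seq_measure"
proof -
  have same: "min_action (proj_U U (restrict B U)) f (card U) x = min_action (proj_U U B) f (card U) x"
    for B by (rule min_action_proj_U_cong[OF assms]) simp
  show ?thesis
    using sets_restrict_preimage[OF assms, of "{b. P (min_action (proj_U U b) f (card U) x)}"]
    by (simp only: mem_Collect_eq same)
qed

lemma prob_min_action_deviation_ge:
  fixes c t :: real and L :: nat
  assumes "U \<subseteq> {1..L}" "0 < L" "n \<le> card U" "\<And>x. \<bar>f x\<bar> \<le> c" "c > 0" "t > 0"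
  defines "g \<equiv> \<lambda>B. min_action (proj_U U B) f (card U) (int n)"
  shows "measure sign_seq_measure {B. t \<le> \<bar>g B - (\<integral>B'. min_action B' f (card U) (int n) \<partial>sign_seq_measure)\<bar>}
           \<le> 2 * exp (- 2 * t\<^sup>2 / (real L * (2*c)\<^sup>2))"
proof -
  define J where "J = {1..L}"
  have U: "finite U" using assms(1) finite_subset by blast
  have avg: "(\<integral>B'. min_action B' f (card U) (int n) \<partial>sign_seq_measure) = cube_avg J g"
    unfolding g_def J_def using assms(1) by (simp add: cube_avg_min_action_proj_U)
  define A where "A = {b. t \<le> \<bar>g b - cube_avg J g\<bar>}"
  have "g B = g (restrict B J)" for B
    unfolding g_def J_def using assms(1) by (intro min_action_proj_U_cong U) auto
  hence "{B. t \<le> \<bar>g B - cube_avg J g\<bar>} = {B. restrict B J \<in> A}"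
    by (auto simp: A_def)
  moreover have "A \<inter> sign_vectors J = {b\<in>sign_vectors J. t \<le> \<bar>g b - cube_avg J g\<bar>}"
    by (auto simp: A_def)
  ultimately have "measure sign_seq_measure {B. t \<le> \<bar>g B - cube_avg J g\<bar>}
      = card {b\<in>sign_vectors J. t \<le> \<bar>g b - cube_avg J g\<bar>} / 2 ^ L"
    by (simp add: measure_restrict_preimage J_def)
  also have "\<dots> \<le> 2 * 2 ^ L * exp (- 2 * t\<^sup>2 / (real L * (2*c)\<^sup>2)) / 2 ^ L"
  proof (intro divide_right_mono)
    have "bounded_differences J (2 * c) g"
      unfolding g_def by (rule bounded_differences_min_action_proj_U[OF U assms(3,4)])
    thus "real (card {b\<in>sign_vectors J. t \<le> \<bar>g b - cube_avg J g\<bar>})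
        \<le> 2 * 2 ^ L * exp (- 2 * t\<^sup>2 / (real L * (2*c)\<^sup>2))"
      using card_abs_deviation_ge_le[of J "2 * c" g t] assms by (simp add: J_def)
  qed simp
  finally show ?thesis by (simp add: avg)
qed

lemma prob_deviations_small_ge:
  fixes c \<kappa> l :: real and n :: nat
  assumes "c > 0" "0 < \<kappa>" "\<kappa> \<le> 2" "l > 1" "\<And>x. \<bar>f x\<bar> \<le> c" "n \<ge> 1"
  shows "1 - 2 * exp (- (n powr (\<kappa>/2))) \<le> measure sign_seq_measure
          {B \<in> space sign_seq_measure. \<forall>m\<in>{1..n}. \<forall>U\<in>U_family (nat \<lfloor>l * n\<rfloor>) n m.
             \<bar>min_action (proj_U U B) f (card U) (int n)
               - (\<integral>B'. min_action B' f (card U) (int n) \<partial>sign_seq_measure)\<bar>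
             < deviation_threshold c \<kappa> l n m}"
    (is "_ \<le> measure _ ?good")
proof -
  define L where "L = nat \<lfloor>l * n\<rfloor>"
  define dev where "dev m U = {B. deviation_threshold c \<kappa> l n m \<le>
      \<bar>min_action (proj_U U B) f (card U) (int n)
        - (\<integral>B'. min_action B' f (card U) (int n) \<partial>sign_seq_measure)\<bar>}" for m U
  define bad where "bad = (\<Union>m\<in>{1..n}. \<Union>U\<in>U_family L n m. dev m U)"
  have "real n \<le> l * n" using assms by simp
  hence L: "n \<le> L" "real L \<le> l * n" by (auto simp: L_def le_nat_iff le_floor_iff)
  have fam: "U \<subseteq> {1..L}" "finite U" "n \<le> card U" if "U \<in> U_family L n m" for U m
    using U_family_memD[OF that] finite_subset[of U "{1..L}"] by auto
  have sets: "dev m U \<in> sets sign_seq_measure" if "U \<in> U_family L n m" for m U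
    unfolding dev_def by (intro sets_min_action_proj_U fam[OF that])
  have dev: "measure sign_seq_measure (dev m U)
      \<le> 2 * exp (- 2 * (deviation_threshold c \<kappa> l n m)\<^sup>2 / (L * (2*c)\<^sup>2))"
    if "m \<in> {1..n}" "U \<in> U_family L n m" for m U
    unfolding dev_def
    by (rule prob_min_action_deviation_ge)
      (use assms that fam[OF that(2)] L in \<open>auto simp: deviation_threshold_def intro!: mult_pos_pos add_pos_pos\<close>)
  have "measure sign_seq_measure bad
      \<le> (\<Sum>m\<in>{1..n}. measure sign_seq_measure (\<Union>U\<in>U_family L n m. dev m U))"
    unfolding bad_def by (intro measure_UNION_le sets.finite_UN finite_U_family sets) auto
  also have "\<dots> \<le> (\<Sum>m\<in>{1..n}. \<Sum>U\<in>U_family L n m. measure sign_seq_measure (dev m U))"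
    by (intro sum_mono measure_UNION_le finite_U_family sets)
  also have "\<dots> \<le> (\<Sum>m\<in>{1..n}. \<Sum>U\<in>U_family L n m.
                     2 * exp (- 2 * (deviation_threshold c \<kappa> l n m)\<^sup>2 / (L * (2*c)\<^sup>2)))"
    by (intro sum_mono dev)
  also have "\<dots> \<le> 2 * exp (- (n powr (\<kappa>/2)))"
    using sum_union_bound_le[of c \<kappa> l L n] assms L by simp
  finally have "measure sign_seq_measure bad \<le> 2 * exp (- (n powr (\<kappa>/2)))" .
  moreover have "bad \<in> sets sign_seq_measure"
    unfolding bad_def by (intro sets.finite_UN finite_U_family sets) auto
  moreover have "?good = space sign_seq_measure - bad"
    unfolding bad_def dev_def L_def by (simp add: set_eq_iff not_le)
  ultimately show ?thesis
    using sign_seq.prob_compl[of bad] by simp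
qed

lemma tendsto_one_of_exp_lower_bound:
  fixes P :: "nat \<Rightarrow> real"
  assumes "p > 0" "\<And>n. n \<ge> 1 \<Longrightarrow> 1 - 2 * exp (- (real n powr p)) \<le> P n" "\<And>n. P n \<le> 1"
  shows "P \<longlonglongrightarrow> 1"
proof (rule tendsto_sandwich[OF _ _ _ tendsto_const])
  show "\<forall>\<^sub>F n in sequentially. 1 - 2 * exp (- (real n powr p)) \<le> P n"
    using assms(2) by (intro eventually_sequentiallyI[of 1])
  show "\<forall>\<^sub>F n in sequentially. P n \<le> 1"
    using assms(3) by simp
  show "(\<lambda>n. 1 - 2 * exp (- (real n powr p))) \<longlonglongrightarrow> 1"
    using assms(1) by real_asymp
qed

theorem mainTheorem18:
  fixes c \<kappa> :: real
  assumes "c > 0" and "0 < \<kappa>" and "\<kappa> < 1/3"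
  shows "\<exists>c\<^sub>\<kappa> > 0. \<forall>l::real. l > 1 \<longrightarrow>
    (\<forall>f :: int \<Rightarrow> real. (\<forall>x. \<bar>f x\<bar> \<le> c) \<longrightarrow>
      ((\<lambda>n::nat. measure sign_seq_measure
          {B \<in> space sign_seq_measure.
             \<forall>m\<in>{1..n}. \<forall>U\<in>U_family (nat \<lfloor>l * real n\<rfloor>) n m.
               \<bar>min_action (proj_U U B) f (card U) (int n)
                 - (\<integral>B'. min_action B' f (card U) (int n) \<partial>sign_seq_measure)\<bar>
               < c\<^sub>\<kappa> * (real m / real n) powr (1/2 - \<kappa>/4) * l powr (1/2 + \<kappa>/4) * real n})
       \<longlonglongrightarrow> 1))"
  by (intro exI[of _ "c * sqrt (2 * (24 + 16/\<kappa>))"] conjI allI impI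
        tendsto_one_of_exp_lower_bound[of "\<kappa>/2"] sign_seq.prob_le_1
        prob_deviations_small_ge[unfolded deviation_threshold_def])
     (use assms in \<open>auto simp: add_pos_pos\<close>)

end
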